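(* Let $F^a:\mathbb{R}^n\times\mathbb{R}^m\times[0,\infty)\to\mathbb{R}^n$ be an open-loop DT model and $U,V:\mathbb{R}^n\times[0,\infty)\to\mathbb{R}^m$ be control laws. Suppose that (i) $F^a$ is StLC, (ii) $U$ is StL, and (iii) the pair $(U,V)$ is StC. Then $\bar F^a_U$ is EPC with $\bar F^a_V$, where $\bar F^a_U(x,T):=F^a(x,U(x,T),T)$ and $\bar F^a_V(x,T):=F^a(x,V(x,T),T)$.
   Context: $\mathcal{K}_\infty$: continuous, strictly increasing, unbounded $\rho:\mathbb{R}_{\ge0}\to\mathbb{R}_{\ge0}$ with $\rho(0)=0$. StLC: an open-loop DT model $F^a$ is Semiglobally small-time Lipschitz Consistent if for each $M,E\ge0$ there exist $K=K(M,E)>0$, $T^*=T^*(M,E)>0$ such that $|F^a(x,u,T)-F^a(y,v,T)|\le(1+KT)|x-y|+KT|u-v|$ for all $|x|,|y|\le M$, $|u|,|v|\le E$, $T\in[0,T^* )$. StL: $U$ is Semiglobally small-time Lipschitz if for each $M\ge0$ there exist $K=K(M)>0$ and $T^*=T^*(M)>0$, with $T^*(\cdot)$ nonincreasing, such that for all $|x|,|y|\le M$ and $T\in[0,T^* )$: $U(0,T)=0$ and $|U(x,T)-U(y,T)|\le K|x-y|$. StC: the pair $(U,V)$ is Semiglobally small-time convergent Consistent if for each $M\ge0$ there exist $\rho\in\mathcal{K}_\infty$ and $T^*=T^*(M)>0$ such that $|U(x,T)-V(x,T)|\le\rho(T)|x|$ for all $|x|\le M$, $T\in[0,T^* )$.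 EPC: a closed-loop model $\bar F^a:\mathbb{R}^n\times(0,\infty)\to\mathbb{R}^n$ is Equilibrium-Preserving Consistent with $\bar F^b$ if for each $M\ge0$ there exist $K=K(M)>0$, $T^*=T^*(M)>0$ and $\rho\in\mathcal{K}_\infty$ such that $|\bar F^a(x,T)-\bar F^b(y,T)|\le(1+KT)|x-y|+T\rho(T)\max\{|x|,|y|\}$ for all $|x|,|y|\le M$, $T\in(0,T^* )$. *)

theory Defs
  imports "HOL-Analysis.Analysis"
begin

definition class_K_inf :: "(real \<Rightarrow> real) \<Rightarrow> bool" where
  "class_K_inf \<rho> \<longleftrightarrow> continuous_on {0..} \<rho> \<and> strict_mono_on {0..} \<rho> \<and> \<rho> 0 = 0
     \<and> (\<forall>t\<ge>0. \<rho> t \<ge> 0) \<and> (\<forall>B. \<exists>t\<ge>0. \<rho> t > B)"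

definition StLC :: "('n::euclidean_space \<Rightarrow> 'm::euclidean_space \<Rightarrow> real \<Rightarrow> 'n) \<Rightarrow> bool" where
  "StLC F \<longleftrightarrow> (\<forall>M\<ge>0. \<forall>E\<ge>0. \<exists>K>0. \<exists>Ts>0. \<forall>x y u v T.
      norm x \<le> M \<longrightarrow> norm y \<le> M \<longrightarrow> norm u \<le> E \<longrightarrow> norm v \<le> E \<longrightarrow> 0 \<le> T \<longrightarrow> T < Ts \<longrightarrow>
      norm (F x u T - F y v T) \<le> (1 + K * T) * norm (x - y) + K * T * norm (u - v))"

definition StL :: "('n::euclidean_space \<Rightarrow> real \<Rightarrow> 'm::euclidean_space) \<Rightarrow> bool" where
  "StL U \<longleftrightarrow> (\<exists>Ts :: real \<Rightarrow> real. (\<forall>M1 M2. 0 \<le> M1 \<longrightarrow> M1 \<le> M2 \<longrightarrow> Ts M2 \<le> Ts M1) \<and>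
      (\<forall>M\<ge>0. Ts M > 0 \<and> (\<exists>K>0. \<forall>x y T. norm x \<le> M \<longrightarrow> norm y \<le> M \<longrightarrow> 0 \<le> T \<longrightarrow> T < Ts M \<longrightarrow>
         U 0 T = 0 \<and> norm (U x T - U y T) \<le> K * norm (x - y))))"

definition StC :: "('n::euclidean_space \<Rightarrow> real \<Rightarrow> 'm::euclidean_space) \<Rightarrow> ('n \<Rightarrow> real \<Rightarrow> 'm) \<Rightarrow> bool" where
  "StC U V \<longleftrightarrow> (\<forall>M\<ge>0. \<exists>\<rho> Ts. class_K_inf \<rho> \<and> Ts > 0 \<and> (\<forall>x T. norm x \<le> M \<longrightarrow> 0 \<le> T \<longrightarrow> T < Ts \<longrightarrow>
      norm (U x T - V x T) \<le> \<rho> T * norm x))"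

definition EPC :: "('n::euclidean_space \<Rightarrow> real \<Rightarrow> 'n) \<Rightarrow> ('n \<Rightarrow> real \<Rightarrow> 'n) \<Rightarrow> bool" where
  "EPC Fa Fb \<longleftrightarrow> (\<forall>M\<ge>0. \<exists>K>0. \<exists>Ts>0. \<exists>\<rho>. class_K_inf \<rho> \<and> (\<forall>x y T. norm x \<le> M \<longrightarrow> norm y \<le> M \<longrightarrow> 0 < T \<longrightarrow> T < Ts \<longrightarrow>
      norm (Fa x T - Fb y T) \<le> (1 + K * T) * norm (x - y) + T * \<rho> T * max (norm x) (norm y)))"

end

theory Submission
  imports Defs
begin

text \<open>On a ball of radius M and for small T, the Lipschitz law U with U(0,T) = 0 grows
  linearly, and V stays within \<open>\<rho>(T)|x|\<close> of it; so both controls are bounded by a constant E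
  depending only on M. The StLC estimate of the open-loop model for this control bound E then
  gives \<open>|F(x,U x) - F(y,V y)| \<le> (1+K_F T)|x-y| + K_F T (K_U |x-y| + \<rho>(T) max(|x|,|y|))\<close>,
  which is the EPC estimate with gain \<open>K_F(1+K_U)\<close> and comparison function \<open>K_F \<rho>\<close>.\<close>

lemma class_K_inf_nonneg:
  assumes "class_K_inf \<rho>" "0 \<le> t"
  shows "0 \<le> \<rho> t"
  using assms unfolding class_K_inf_def by auto

lemma class_K_inf_mono:
  assumes "class_K_inf \<rho>" "0 \<le> s" "s \<le> t"
  shows "\<rho> s \<le> \<rho> t"
  using assms unfolding class_K_inf_def strict_mono_on_def
  by (cases "s = t") (auto intro: less_imp_le)

lemma class_K_inf_scale:
  assumes "class_K_inf \<rho>" "c > 0"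
  shows "class_K_inf (\<lambda>t. c * \<rho> t)"
  unfolding class_K_inf_def
proof (intro conjI allI impI)
  show "continuous_on {0..} (\<lambda>t. c * \<rho> t)"
    using assms unfolding class_K_inf_def by (intro continuous_intros) auto
  show "strict_mono_on {0..} (\<lambda>t. c * \<rho> t)"
    using assms unfolding class_K_inf_def strict_mono_on_def by auto
  show "c * \<rho> 0 = 0"
    using assms unfolding class_K_inf_def by auto
  show "0 \<le> c * \<rho> t" if "0 \<le> t" for t
    using assms class_K_inf_nonneg that by simp
  show "\<exists>t\<ge>0. B < c * \<rho> t" for B
  proof -
    obtain t where "t \<ge> 0" "\<rho> t > B / c"
      using assms unfolding class_K_inf_def by blast
    then show ?thesis
      using assms(2) by (auto simp: field_simps)
  qed
qed

lemma StLC_ballE: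
  assumes "StLC F" "0 \<le> M" "0 \<le> E"
  obtains K Ts where "K > 0" "Ts > 0"
    "\<And>x y u v T. norm x \<le> M \<Longrightarrow> norm y \<le> M \<Longrightarrow> norm u \<le> E \<Longrightarrow> norm v \<le> E \<Longrightarrow>
       0 \<le> T \<Longrightarrow> T < Ts \<Longrightarrow>
       norm (F x u T - F y v T) \<le> (1 + K * T) * norm (x - y) + K * T * norm (u - v)"
  using assms(1)[unfolded StLC_def, rule_format, OF assms(2,3)] that by blast

lemma StL_ballE:
  assumes "StL U" "0 \<le> M"
  obtains K Ts where "K > 0" "Ts > 0"
    "\<And>x y T. norm x \<le> M \<Longrightarrow> norm y \<le> M \<Longrightarrow> 0 \<le> T \<Longrightarrow> T < Ts \<Longrightarrow>
       norm (U x T - U y T) \<le> K * norm (x - y)"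
    "\<And>x T. norm x \<le> M \<Longrightarrow> 0 \<le> T \<Longrightarrow> T < Ts \<Longrightarrow> norm (U x T) \<le> K * norm x"
proof -
  obtain K Ts where K: "K > 0" "Ts > 0" and U:
    "\<And>x y T. norm x \<le> M \<Longrightarrow> norm y \<le> M \<Longrightarrow> 0 \<le> T \<Longrightarrow> T < Ts \<Longrightarrow>
       U 0 T = 0 \<and> norm (U x T - U y T) \<le> K * norm (x - y)"
    using assms unfolding StL_def by blast
  have "norm (U x T) \<le> K * norm x" if "norm x \<le> M" "0 \<le> T" "T < Ts" for x T
    using U[of x 0 T] U[of 0 0 T] that assms(2) by simp
  with K U that show thesis by blast
qed

lemma StC_ballE:
  assumes "StC U V" "0 \<le> M"
  obtains \<rho> Ts where "class_K_inf \<rho>" "Ts > 0"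
    "\<And>x T. norm x \<le> M \<Longrightarrow> 0 \<le> T \<Longrightarrow> T < Ts \<Longrightarrow> norm (U x T - V x T) \<le> \<rho> T * norm x"
  using assms(1)[unfolded StC_def, rule_format, OF assms(2)] that by blast

lemma norm_diff_le_lipschitz_plus_mismatch:
  fixes x y :: "'a::real_normed_vector" and ux uy vy :: "'b::real_normed_vector"
  assumes "norm (ux - uy) \<le> K * norm (x - y)" "norm (uy - vy) \<le> r * norm y" "0 \<le> r"
  shows "norm (ux - vy) \<le> K * norm (x - y) + r * max (norm x) (norm y)"
proof -
  have "norm (ux - vy) \<le> norm (ux - uy) + norm (uy - vy)"
    using norm_triangle_ineq[of "ux - uy" "uy - vy"] by simp
  moreover have "r * norm y \<le> r * max (norm x) (norm y)"
    using assms(3) by (intro mult_left_mono) auto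
  ultimately show ?thesis
    using assms(1,2) by linarith
qed

lemma StL_StC_ballE:
  assumes "StL U" "StC U V" "0 \<le> M"
  obtains K \<rho> Ts E where "K > 0" "class_K_inf \<rho>" "Ts > 0" "0 \<le> E"
    "\<And>x T. norm x \<le> M \<Longrightarrow> 0 \<le> T \<Longrightarrow> T < Ts \<Longrightarrow> norm (U x T) \<le> E \<and> norm (V x T) \<le> E"
    "\<And>x y T. norm x \<le> M \<Longrightarrow> norm y \<le> M \<Longrightarrow> 0 \<le> T \<Longrightarrow> T < Ts \<Longrightarrow>
       norm (U x T - V y T) \<le> K * norm (x - y) + \<rho> T * max (norm x) (norm y)"
proof -
  obtain K TU where K: "K > 0" "TU > 0"
    and lip: "\<And>x y T. norm x \<le> M \<Longrightarrow> norm y \<le> M \<Longrightarrow> 0 \<le> T \<Longrightarrow> T < TU \<Longrightarrow>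
       norm (U x T - U y T) \<le> K * norm (x - y)"
    and lin: "\<And>x T. norm x \<le> M \<Longrightarrow> 0 \<le> T \<Longrightarrow> T < TU \<Longrightarrow> norm (U x T) \<le> K * norm x"
    using StL_ballE[OF assms(1,3)] by blast
  obtain \<rho> TC where \<rho>: "class_K_inf \<rho>" "TC > 0"
    and UV: "\<And>x T. norm x \<le> M \<Longrightarrow> 0 \<le> T \<Longrightarrow> T < TC \<Longrightarrow> norm (U x T - V x T) \<le> \<rho> T * norm x"
    using StC_ballE[OF assms(2,3)] by blast
  define Ts where "Ts = min TU TC"
  define E where "E = (K + \<rho> TC) * M"
  have E: "0 \<le> E"
    using K \<rho> assms(3) class_K_inf_nonneg unfolding E_def by auto
  have bounded: "norm (U x T) \<le> E \<and> norm (V x T) \<le> E"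
    if x: "norm x \<le> M" and T: "0 \<le> T" "T < Ts" for x T
  proof -
    have T': "T < TU" "T < TC"
      using T unfolding Ts_def by auto
    have "\<rho> T * norm x \<le> \<rho> TC * M"
      using x T T' \<rho> class_K_inf_mono class_K_inf_nonneg by (intro mult_mono) auto
    moreover have "K * norm x \<le> K * M"
      using x K by simp
    ultimately have U: "norm (U x T) \<le> K * M" and UV': "norm (U x T - V x T) \<le> \<rho> TC * M"
      using lin[OF x T(1) T'(1)] UV[OF x T(1) T'(2)] by linarith+
    have "norm (V x T) \<le> norm (U x T) + norm (U x T - V x T)"
      using norm_triangle_ineq4[of "U x T" "U x T - V x T"] by simp
    moreover have "0 \<le> \<rho> TC * M"
      using \<rho> assms(3) class_K_inf_nonneg by simp
    ultimately show ?thesis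
      using U UV' unfolding E_def by (simp add: distrib_right)
  qed
  have mismatch: "norm (U x T - V y T) \<le> K * norm (x - y) + \<rho> T * max (norm x) (norm y)"
    if "norm x \<le> M" "norm y \<le> M" "0 \<le> T" "T < Ts" for x y T
    using that lip UV \<rho>(1) class_K_inf_nonneg unfolding Ts_def
    by (intro norm_diff_le_lipschitz_plus_mismatch) auto
  have "Ts > 0"
    using K \<rho> unfolding Ts_def by simp
  from that[OF K(1) \<rho>(1) this E bounded mismatch] show thesis .
qed

theorem theorem2:
  fixes Fa :: "real^'n \<Rightarrow> real^'m \<Rightarrow> real \<Rightarrow> real^'n"
    and U V :: "real^'n \<Rightarrow> real \<Rightarrow> real^'m"
  assumes "StLC Fa" and "StL U" and "StC U V"
  shows "EPC (\<lambda>x T. Fa x (U x T) T) (\<lambda>x T. Fa x (V x T) T)"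
  unfolding EPC_def
proof (intro allI impI)
  fix M :: real
  assume M: "0 \<le> M"
  obtain KU \<rho> TUV E where KU: "KU > 0" and \<rho>: "class_K_inf \<rho>" and TUV: "TUV > 0" "0 \<le> E"
    and bounded: "\<And>x T. norm x \<le> M \<Longrightarrow> 0 \<le> T \<Longrightarrow> T < TUV \<Longrightarrow> norm (U x T) \<le> E \<and> norm (V x T) \<le> E"
    and mismatch: "\<And>x y T. norm x \<le> M \<Longrightarrow> norm y \<le> M \<Longrightarrow> 0 \<le> T \<Longrightarrow> T < TUV \<Longrightarrow>
       norm (U x T - V y T) \<le> KU * norm (x - y) + \<rho> T * max (norm x) (norm y)"
    using StL_StC_ballE[OF assms(2,3) M] by blast
  obtain KF TF where KF: "KF > 0" "TF > 0"
    and F: "\<And>x y u v T. norm x \<le> M \<Longrightarrow> norm y \<le> M \<Longrightarrow> norm u \<le> E \<Longrightarrow> norm v \<le> E \<Longrightarrow>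
       0 \<le> T \<Longrightarrow> T < TF \<Longrightarrow>
       norm (Fa x u T - Fa y v T) \<le> (1 + KF * T) * norm (x - y) + KF * T * norm (u - v)"
    using StLC_ballE[OF assms(1) M TUV(2)] by blast
  show "\<exists>K>0. \<exists>Ts>0. \<exists>\<rho>. class_K_inf \<rho> \<and> (\<forall>x y T. norm x \<le> M \<longrightarrow> norm y \<le> M \<longrightarrow> 0 < T \<longrightarrow> T < Ts \<longrightarrow>
      norm (Fa x (U x T) T - Fa y (V y T) T) \<le> (1 + K * T) * norm (x - y) + T * \<rho> T * max (norm x) (norm y))"
  proof (intro exI conjI allI impI)
    show "0 < KF * (1 + KU)" "0 < min TF TUV"
      using KF KU TUV by auto
    show "class_K_inf (\<lambda>t. KF * \<rho> t)"
      using class_K_inf_scale[OF \<rho> KF(1)] .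
    fix x y :: "real^'n" and T :: real
    assume x: "norm x \<le> M" and y: "norm y \<le> M" and T: "0 < T" "T < min TF TUV"
    have "norm (Fa x (U x T) T - Fa y (V y T) T)
        \<le> (1 + KF * T) * norm (x - y) + KF * T * norm (U x T - V y T)"
      using F bounded x y T by simp
    also have "\<dots> \<le> (1 + KF * T) * norm (x - y) + KF * T * (KU * norm (x - y) + \<rho> T * max (norm x) (norm y))"
      using mismatch[OF x y] KF T by (intro add_left_mono mult_left_mono) auto
    finally show "norm (Fa x (U x T) T - Fa y (V y T) T)
        \<le> (1 + KF * (1 + KU) * T) * norm (x - y) + T * (KF * \<rho> T) * max (norm x) (norm y)"
      by (simp add: algebra_simps)
  qed
qed

end
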